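(* Assume the setting in the context, and suppose in addition that $S$ is locally optimal, i.e. $\sum_{a \in A} w_{(A,B)}(a)^2 \le \sum_{b \in B} w(b)^2$ for every $k$-replacement $(A,B)$ for $S$. Let $O \in \mathcal{I}$ and let $Y_e$, $P_x$, $N_x$ be as in the context. Then for every $x \in S$, \[ w(x) \;\ge\; \sum_{e \in P_x} \Bigl(2\, w_{(P_x,N_x)}(e) - \sum_{z \in Y_e} w(z)\Bigr). \]
   Context: Setting. $\mathcal{G}$ is a finite ground set with $|\mathcal{G}| = n$, and $f : 2^{\mathcal{G}} \to \mathbb{R}_{\ge 0}$ is a nonnegative monotone submodular function. $\mathcal{I} \subseteq 2^{\mathcal{G}}$ is a nonempty downward-closed family that is a $k$-exchange system: for all $A, B \in \mathcal{I}$ there is a collection $\{Y_e \subseteq B \setminus A : e \in A \setminus B\}$ such that (K1) $|Y_e| \le k$ for each $e$; (K2) every $x \in B \setminus A$ lies in at most $k$ of the sets $Y_e$; (K3) for every $C \subseteq A \setminus B$, $(B \setminus \bigcup_{e \in C} Y_e) \cup C \in \mathcal{I}$. This collection is extended by setting $Y_e = \{e\}$ for each $e \in A \cap B$. Weights. Fix $\alpha > 0$ and a total order $\prec$ on $\mathcal{G}$. For $S \in \mathcal{I}$ with elements $s_1 \prec \dots \prec s_m$ and $S_i = \{s_1,\dots,s_i\}$, define $w(s_i) = \lfloor (f(S_{i-1} \cup \{s_i\}) - f(S_{i-1}))/\alpha \rfloor \alpha$. A $k$-replacement for $S$ is a pair $(A,B)$ with $B \subseteq S$, $A \subseteq \mathcal{G}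 \setminus (S \setminus B)$, $|A| \le k$, $|B| \le k^2 - k + 1$, and $(S \setminus B) \cup A \in \mathcal{I}$. For such a pair, write $A = \{a_1 \prec \dots \prec a_r\}$, $A_i = \{a_1,\dots,a_i\}$, and define $w_{(A,B)}(a_i) = \lfloor (f((S\setminus B) \cup A_{i-1} \cup \{a_i\}) - f((S\setminus B)\cup A_{i-1}))/\alpha \rfloor \alpha$. Sets $P_x, N_x$. Given $S, O \in \mathcal{I}$, take the neighborhoods $\{Y_e\}_{e \in O}$ given by the $k$-exchange property applied with $A = O$, $B = S$ (extended by $Y_e = \{e\}$ for $e \in O \cap S$). For each $e \in O$ with $Y_e \ne \emptyset$, choose $x_e \in Y_e$ of maximum weight $w$ (ties broken arbitrarily). For $x \in S$, let $P_x = \{e \in O : x_e = x\}$ and $N_x = \bigcup_{e \in P_x} Y_e$. *)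

theory Defs
  imports Complex_Main
begin

definition nonneg_monotone_submodular :: "'a set \<Rightarrow> ('a set \<Rightarrow> real) \<Rightarrow> bool" where
  "nonneg_monotone_submodular G f \<longleftrightarrow>
     (\<forall>A. A \<subseteq> G \<longrightarrow> 0 \<le> f A) \<and>
     (\<forall>A B. A \<subseteq> B \<and> B \<subseteq> G \<longrightarrow> f A \<le> f B) \<and>
     (\<forall>A B. A \<subseteq> G \<and> B \<subseteq> G \<longrightarrow> f (A \<union> B) + f (A \<inter> B) \<le> f A + f B)"

text \<open>The exchange neighbourhoods Y for the pair (A,B): properties (K1)-(K3).\<close>
definition exchange_nbhd :: "nat \<Rightarrow> 'a set set \<Rightarrow> 'a set \<Rightarrow> 'a set \<Rightarrow> ('a \<Rightarrow> 'a set) \<Rightarrow> bool" where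
  "exchange_nbhd k I A B Y \<longleftrightarrow>
     (\<forall>e \<in> A - B. Y e \<subseteq> B - A \<and> card (Y e) \<le> k) \<and>
     (\<forall>x \<in> B - A. card {e \<in> A - B. x \<in> Y e} \<le> k) \<and>
     (\<forall>C. C \<subseteq> A - B \<longrightarrow> (B - (\<Union>e\<in>C. Y e)) \<union> C \<in> I)"

definition k_exchange_system :: "nat \<Rightarrow> 'a set \<Rightarrow> 'a set set \<Rightarrow> bool" where
  "k_exchange_system k G I \<longleftrightarrow>
     I \<subseteq> Pow G \<and> I \<noteq> {} \<and> (\<forall>A \<in> I. \<forall>B. B \<subseteq> A \<longrightarrow> B \<in> I) \<and>
     (\<forall>A \<in> I. \<forall>B \<in> I. \<exists>Y. exchange_nbhd k I A B Y)"

text \<open>Weight w(x) of x in S: rounded-down marginal gain w.r.t. the elements of S preceding x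
  in the strict order r ((y,x) \<in> r means y precedes x).\<close>
definition wt :: "('a set \<Rightarrow> real) \<Rightarrow> real \<Rightarrow> 'a rel \<Rightarrow> 'a set \<Rightarrow> 'a \<Rightarrow> real" where
  "wt f \<alpha> r S x =
     of_int \<lfloor>(f (insert x {y \<in> S. (y, x) \<in> r}) - f {y \<in> S. (y, x) \<in> r}) / \<alpha>\<rfloor> * \<alpha>"

definition repl_wt :: "('a set \<Rightarrow> real) \<Rightarrow> real \<Rightarrow> 'a rel \<Rightarrow> 'a set \<Rightarrow> 'a set \<Rightarrow> 'a set \<Rightarrow> 'a \<Rightarrow> real" where
  "repl_wt f \<alpha> r S A B a =
     of_int \<lfloor>(f (insert a ((S - B) \<union> {y \<in> A. (y, a) \<in> r}))
               - f ((S - B) \<union> {y \<in> A. (y, a) \<in> r})) / \<alpha>\<rfloor> * \<alpha>"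

definition k_replacement :: "nat \<Rightarrow> 'a set \<Rightarrow> 'a set set \<Rightarrow> 'a set \<Rightarrow> 'a set \<Rightarrow> 'a set \<Rightarrow> bool" where
  "k_replacement k G I S A B \<longleftrightarrow>
     B \<subseteq> S \<and> A \<subseteq> G - (S - B) \<and> card A \<le> k \<and> card B \<le> k^2 - k + 1 \<and> (S - B) \<union> A \<in> I"

definition locally_optimal :: "nat \<Rightarrow> 'a set \<Rightarrow> 'a set set \<Rightarrow> ('a set \<Rightarrow> real) \<Rightarrow> real \<Rightarrow> 'a rel \<Rightarrow> 'a set \<Rightarrow> bool" where
  "locally_optimal k G I f \<alpha> r S \<longleftrightarrow>
     (\<forall>A B. k_replacement k G I S A B \<longrightarrow>
        (\<Sum>a\<in>A. (repl_wt f \<alpha> r S A B a)^2) \<le> (\<Sum>b\<in>B. (wt f \<alpha> r S b)^2))"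

end

theory Submission
  imports Defs
begin

(* Fix x in S and write W = w(x), a_e = w_(P_x,N_x)(e).  Every e in P_x has x
   in its neighbourhood Y_e, and x is a heaviest element of Y_e, so 0 <= w(z) <= W on N_x.
   (1) (P_x, N_x) is a k-replacement for S: |P_x| <= k by (K2), the sets Y_e (e in P_x)
       share the point x, so |N_x| <= 1 + k(k-1), and membership in I comes from (K3).
   (2) Local optimality gives  sum_e a_e^2 <= sum_{z in N_x} w(z)^2 <= W^2 + W s,
       where s = sum_{z in N_x - x} w(z).
   (3) Counting x once per e,  sum_e sum_{z in Y_e} w(z) >= |P_x| W + s.
   (4) Summing 2 W a_e <= a_e^2 + W^2 and combining (2), (3) gives
       sum_e (2 a_e - sum_{z in Y_e} w(z)) <= W. *)

lemma sum_UN_le_nonneg: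
  fixes g :: "'b \<Rightarrow> real"
  assumes "finite A" "\<And>i. i \<in> A \<Longrightarrow> finite (F i)"
    and "\<And>z. z \<in> (\<Union>i\<in>A. F i) \<Longrightarrow> 0 \<le> g z"
  shows "sum g (\<Union>i\<in>A. F i) \<le> (\<Sum>i\<in>A. sum g (F i))"
  using assms
proof (induction A rule: finite_induct)
  case empty then show ?case by simp
next
  case (insert a A)
  have fin_U: "finite (\<Union>i\<in>A. F i)" and fin_a: "finite (F a)" using insert by auto
  have overlap_nonneg: "0 \<le> sum g (F a \<inter> (\<Union>i\<in>A. F i))"
    by (rule sum_nonneg) (use insert.prems(2) in auto)
  have "sum g (\<Union>i\<in>insert a A. F i)
        = sum g (F a) + sum g (\<Union>i\<in>A. F i) - sum g (F a \<inter> (\<Union>i\<in>A. F i))"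
    using sum_Un[OF fin_a fin_U] by simp
  also have "\<dots> \<le> sum g (F a) + (\<Sum>i\<in>A. sum g (F i))"
    using overlap_nonneg insert by auto
  finally show ?case using insert by simp
qed

lemma card_UN_common_point:
  assumes fin: "finite P" "\<And>e. e \<in> P \<Longrightarrow> finite (Y e)"
    and common: "\<And>e. e \<in> P \<Longrightarrow> x \<in> Y e"
    and small: "\<And>e. e \<in> P \<Longrightarrow> card (Y e) \<le> k"
  shows "card (\<Union>e\<in>P. Y e) \<le> 1 + card P * (k - 1)"
proof -
  have "(\<Union>e\<in>P. Y e) \<subseteq> insert x (\<Union>e\<in>P. Y e - {x})" by blast
  then have "card (\<Union>e\<in>P. Y e) \<le> card (insert x (\<Union>e\<in>P. Y e - {x}))"
    by (rule card_mono[rotated]) (use fin in auto)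
  also have "\<dots> = Suc (card (\<Union>e\<in>P. Y e - {x}))"
    by (rule card_insert_disjoint) (use fin in auto)
  also have "\<dots> \<le> Suc (\<Sum>e\<in>P. card (Y e - {x}))"
    using card_UN_le[OF fin(1), of "\<lambda>e. Y e - {x}"] by (simp only: Suc_le_mono)
  also have "\<dots> \<le> Suc (\<Sum>e\<in>P. k - 1)"
    using sum_mono[of P "\<lambda>e. card (Y e - {x})" "\<lambda>e. k - 1"] common small
    by (simp add: card_Diff_singleton diff_le_mono)
  finally have "card (\<Union>e\<in>P. Y e) \<le> Suc (\<Sum>e\<in>P. k - 1)" .
  then show ?thesis by (simp only: sum_constant of_nat_id Suc_eq_plus1_left)
qed

lemma wt_nonneg:
  assumes f: "nonneg_monotone_submodular G f" and alpha: "\<alpha> > 0"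
    and SG: "S \<subseteq> G" and z: "z \<in> G"
  shows "0 \<le> wt f \<alpha> r S z"
proof -
  define T where "T = {y \<in> S. (y, z) \<in> r}"
  have mono: "\<forall>A B. A \<subseteq> B \<and> B \<subseteq> G \<longrightarrow> f A \<le> f B"
    using f unfolding nonneg_monotone_submodular_def by (elim conjE)
  have "T \<subseteq> S" unfolding T_def by (rule Collect_restrict)
  then have "insert z T \<subseteq> G" using SG z by blast
  then have "f T \<le> f (insert z T)" using mono[rule_format, OF conjI[OF subset_insertI]] by blast
  then have "0 \<le> \<lfloor>(f (insert z T) - f T) / \<alpha>\<rfloor>" using alpha by simp
  then show ?thesis unfolding wt_def T_def[symmetric] using alpha by simp
qed

text \<open>Every neighbourhood of an element of O lies in S: by (K1) off S, and by the
  convention Y_e = {e} on O \<inter> S.\<close>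
lemma exchange_nbhd_subset:
  assumes Y: "exchange_nbhd k I Opt S Y" and Y_common: "\<forall>e \<in> Opt \<inter> S. Y e = {e}"
    and e: "e \<in> Opt"
  shows "Y e \<subseteq> S"
  using assms unfolding exchange_nbhd_def by (cases "e \<in> S") auto

lemma common_neighbour_replacement:
  assumes kpos: "k \<ge> 1" and OG: "Opt \<subseteq> G" and finO: "finite Opt" and finS: "finite S"
    and Y: "exchange_nbhd k I Opt S Y" and Y_common: "\<forall>e \<in> Opt \<inter> S. Y e = {e}"
    and x: "x \<in> S" and PO: "P \<subseteq> Opt" and common: "\<And>e. e \<in> P \<Longrightarrow> x \<in> Y e"
  shows "k_replacement k G I S P (\<Union>e\<in>P. Y e)"
proof -
  define N where "N = (\<Union>e\<in>P. Y e)"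
  have K1: "\<forall>e \<in> Opt - S. Y e \<subseteq> S - Opt \<and> card (Y e) \<le> k"
    and K2: "\<forall>z \<in> S - Opt. card {e \<in> Opt - S. z \<in> Y e} \<le> k"
    and K3: "\<forall>C. C \<subseteq> Opt - S \<longrightarrow> (S - (\<Union>e\<in>C. Y e)) \<union> C \<in> I"
    using Y unfolding exchange_nbhd_def by blast+
  have NS: "N \<subseteq> S" using exchange_nbhd_subset[OF Y Y_common] PO unfolding N_def by blast
  have S_in_I: "S \<in> I" using K3[rule_format, of "{}"] by simp
  have kk: "1 + k * (k - 1) = k^2 - k + 1" using kpos
    by (cases k) (auto simp: power2_eq_square)
  show ?thesis
  proof (cases "x \<in> Opt")
    case True
    txt \<open>Then x is its own only neighbour, so P \<subseteq> {x} and the exchange is trivial.\<close>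
    have "P \<subseteq> {x}"
      using K1 Y_common PO common True by force
    then consider "P = {}" | "P = {x}" by blast
    then show ?thesis
    proof cases
      case 1 then show ?thesis using S_in_I unfolding k_replacement_def by simp
    next
      case 2
      have "Y x = {x}" using Y_common True x by blast
      moreover have "S - {x} \<union> {x} = S" using x by blast
      ultimately show ?thesis
        unfolding k_replacement_def 2 using x S_in_I True OG kpos by auto
    qed
  next
    case False
    txt \<open>Then no element of P lies in S, and (K2) at x bounds the size of P.\<close>
    have PS: "P \<subseteq> Opt - S" using Y_common PO common False by force
    have "card P \<le> card {e \<in> Opt - S. x \<in> Y e}"
      by (rule card_mono) (use finO PS common in auto)
    also have "\<dots> \<le> k" using K2 x False by blast
    finally have cardP: "card P \<le> k" .
    have "card N \<le> 1 + card P * (k - 1)"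
      unfolding N_def
    proof (rule card_UN_common_point)
      show "finite P" using PO finO by (rule finite_subset)
      show "finite (Y e)" if "e \<in> P" for e
        using NS finS that unfolding N_def by (meson UN_subset_iff finite_subset)
      show "x \<in> Y e" if "e \<in> P" for e using that by (rule common)
      show "card (Y e) \<le> k" if "e \<in> P" for e using K1 PS that by blast
    qed
    also have "\<dots> \<le> 1 + k * (k - 1)" using cardP by simp
    finally have cardN: "card N \<le> k^2 - k + 1" using kk by simp
    have "(S - N) \<union> P \<in> I" using K3 PS unfolding N_def by blast
    moreover have "P \<subseteq> G - (S - N)" using PS OG by blast
    ultimately show ?thesis
      using NS cardP cardN unfolding k_replacement_def N_def by blast
  qed
qed

lemma sum_squares_le_max_times_sum:
  fixes w :: "'b \<Rightarrow> real"
  assumes finN: "finite N" and xN: "x \<in> N"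
    and bounds: "\<And>z. z \<in> N \<Longrightarrow> 0 \<le> w z \<and> w z \<le> w x"
  shows "(\<Sum>z\<in>N. (w z)^2) \<le> (w x)^2 + w x * (\<Sum>z\<in>N - {x}. w z)"
proof -
  have "(\<Sum>z\<in>N. (w z)^2) = (w x)^2 + (\<Sum>z\<in>N - {x}. (w z)^2)"
    using sum.remove[OF finN xN] .
  also have "(\<Sum>z\<in>N - {x}. (w z)^2) \<le> (\<Sum>z\<in>N - {x}. w x * w z)"
    by (rule sum_mono) (use bounds in \<open>auto simp: power2_eq_square mult_right_mono\<close>)
  finally show ?thesis by (simp add: sum_distrib_left)
qed

text \<open>If each of the finite sets Y_e (e \<in> P) contains x, then summing the nonnegative
  weights over each Y_e separately counts x once per e and the rest of the union at
  least once.\<close>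
lemma sum_nbhds_ge:
  fixes w :: "'b \<Rightarrow> real"
  assumes finP: "finite P" and finY: "\<And>e. e \<in> P \<Longrightarrow> finite (Y e)"
    and common: "\<And>e. e \<in> P \<Longrightarrow> x \<in> Y e"
    and nonneg: "\<And>z. z \<in> (\<Union>e\<in>P. Y e) \<Longrightarrow> 0 \<le> w z"
  shows "real (card P) * w x + (\<Sum>z\<in>(\<Union>e\<in>P. Y e) - {x}. w z)
           \<le> (\<Sum>e\<in>P. \<Sum>z\<in>Y e. w z)"
proof -
  have "(\<Sum>z\<in>(\<Union>e\<in>P. Y e) - {x}. w z) = sum w (\<Union>e\<in>P. Y e - {x})"
    by (rule sum.cong) auto
  also have "\<dots> \<le> (\<Sum>e\<in>P. \<Sum>z\<in>Y e - {x}. w z)"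
    by (rule sum_UN_le_nonneg) (use finP finY nonneg in auto)
  also have "real (card P) * w x + \<dots> = (\<Sum>e\<in>P. w x + (\<Sum>z\<in>Y e - {x}. w z))"
    by (simp add: sum.distrib)
  also have "\<dots> = (\<Sum>e\<in>P. \<Sum>z\<in>Y e. w z)"
    by (rule sum.cong[OF refl]) (simp add: sum.remove[OF finY common])
  finally show ?thesis by simp
qed

text \<open>The arithmetic heart of the argument: from a bound on sum of squares of the a_e and
  a lower bound on the sum of the b_e, derived via 2 W a \<le> a^2 + W^2.\<close>
lemma sum_twice_minus_le:
  fixes a b :: "'b \<Rightarrow> real"
  assumes finP: "finite P" and W: "0 \<le> W" and s: "0 \<le> s"
    and squares: "(\<Sum>e\<in>P. (a e)^2) \<le> W^2 + W * s"
    and b_sum: "real (card P) * W + s \<le> (\<Sum>e\<in>P. b e)"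
  shows "(\<Sum>e\<in>P. 2 * a e - b e) \<le> W"
proof (cases "W = 0")
  case True
  then have "(\<Sum>e\<in>P. (a e)^2) \<le> 0" using squares by simp
  then have "\<forall>e\<in>P. a e = 0"
    using sum_nonneg_eq_0_iff[OF finP, of "\<lambda>e. (a e)^2"] by (simp add: order_antisym sum_nonneg)
  then show ?thesis using True s b_sum by (simp add: sum_subtractf sum_negf)
next
  case False
  have "W * (2 * (\<Sum>e\<in>P. a e)) = (\<Sum>e\<in>P. 2 * W * a e)"
    by (simp add: sum_distrib_left sum_distrib_right mult.commute mult.left_commute)
  also have "\<dots> \<le> (\<Sum>e\<in>P. (a e)^2 + W^2)"
  proof (rule sum_mono)
    fix e
    have "0 \<le> (a e - W)^2" by simp
    then show "2 * W * a e \<le> (a e)^2 + W^2" by (simp add: power2_diff algebra_simps)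
  qed
  also have "\<dots> = (\<Sum>e\<in>P. (a e)^2) + real (card P) * W^2" by (simp add: sum.distrib)
  also have "\<dots> \<le> W * (W + (real (card P) * W + s))"
    using squares by (simp add: algebra_simps power2_eq_square)
  also have "\<dots> \<le> W * (W + (\<Sum>e\<in>P. b e))" using b_sum W by (simp add: mult_left_mono)
  finally have "2 * (\<Sum>e\<in>P. a e) \<le> W + (\<Sum>e\<in>P. b e)" using W False by simp
  then show ?thesis by (simp add: sum_subtractf sum_distrib_left)
qed

lemma common_heaviest_point_bound:
  fixes w a :: "'b \<Rightarrow> real"
  assumes finP: "finite P" and finY: "\<And>e. e \<in> P \<Longrightarrow> finite (Y e)"
    and common: "\<And>e. e \<in> P \<Longrightarrow> x \<in> Y e"
    and bounds: "\<And>z. z \<in> (\<Union>e\<in>P. Y e) \<Longrightarrow> 0 \<le> w z \<and> w z \<le> w x"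
    and w_x: "0 \<le> w x"
    and exchange: "(\<Sum>e\<in>P. (a e)^2) \<le> (\<Sum>z\<in>(\<Union>e\<in>P. Y e). (w z)^2)"
  shows "(\<Sum>e\<in>P. 2 * a e - (\<Sum>z\<in>Y e. w z)) \<le> w x"
proof (cases "P = {}")
  case True then show ?thesis using w_x by simp
next
  case False
  define N where "N = (\<Union>e\<in>P. Y e)"
  have xN: "x \<in> N" using False common unfolding N_def by blast
  have finN: "finite N" using finP finY unfolding N_def by blast
  have bounds_N: "0 \<le> w z \<and> w z \<le> w x" if "z \<in> N" for z
    using bounds that unfolding N_def .
  have nonneg_N: "0 \<le> w z" if "z \<in> N" for z using bounds_N[OF that] by (rule conjunct1)
  have rest_nonneg: "0 \<le> (\<Sum>z\<in>N - {x}. w z)" using nonneg_N by (intro sum_nonneg) blast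
  have "(\<Sum>z\<in>N. (w z)^2) \<le> (w x)^2 + w x * (\<Sum>z\<in>N - {x}. w z)"
    by (rule sum_squares_le_max_times_sum[OF finN xN]) (rule bounds_N)
  with exchange[folded N_def]
  have squares: "(\<Sum>e\<in>P. (a e)^2) \<le> (w x)^2 + w x * (\<Sum>z\<in>N - {x}. w z)"
    by (rule order_trans)
  have nbhds: "real (card P) * w x + (\<Sum>z\<in>N - {x}. w z) \<le> (\<Sum>e\<in>P. \<Sum>z\<in>Y e. w z)"
    unfolding N_def by (rule sum_nbhds_ge) (use finP finY common nonneg_N[unfolded N_def] in blast)+
  show ?thesis by (rule sum_twice_minus_le[OF finP w_x rest_nonneg squares nbhds])
qed

theorem mainTheorem3:
  fixes G :: "'a set" and f :: "'a set \<Rightarrow> real" and I :: "'a set set"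
    and k :: nat and \<alpha> :: real and r :: "'a rel"
    and S Opt :: "'a set" and Y :: "'a \<Rightarrow> 'a set" and xe :: "'a \<Rightarrow> 'a"
    and P N :: "'a \<Rightarrow> 'a set" and x :: 'a
  assumes finG: "finite G"
    and f: "nonneg_monotone_submodular G f"
    and kpos: "k \<ge> 1"
    and kex: "k_exchange_system k G I"
    and alpha: "\<alpha> > 0"
    and ord: "strict_linear_order_on G r"
    and S: "S \<in> I"
    and opt: "locally_optimal k G I f \<alpha> r S"
    and Opt: "Opt \<in> I"
    and Y: "exchange_nbhd k I Opt S Y"
    and Y_common: "\<forall>e \<in> Opt \<inter> S. Y e = {e}"
    and xe: "\<forall>e \<in> Opt. Y e \<noteq> {} \<longrightarrow>
                xe e \<in> Y e \<and> (\<forall>z \<in> Y e. wt f \<alpha> r S z \<le> wt f \<alpha> r S (xe e))"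
    and P_def: "\<forall>y. P y = {e \<in> Opt. Y e \<noteq> {} \<and> xe e = y}"
    and N_def: "\<forall>y. N y = (\<Union>e \<in> P y. Y e)"
    and x: "x \<in> S"
  shows "wt f \<alpha> r S x \<ge>
           (\<Sum>e \<in> P x. 2 * repl_wt f \<alpha> r S (P x) (N x) e - (\<Sum>z \<in> Y e. wt f \<alpha> r S z))"
proof -
  let ?w = "wt f \<alpha> r S"
  have SG: "S \<subseteq> G" and OG: "Opt \<subseteq> G" using kex S Opt unfolding k_exchange_system_def by auto
  have finS: "finite S" and finO: "finite Opt" using SG OG finG finite_subset by auto
  have PO: "P x \<subseteq> Opt" and Nx: "N x = (\<Union>e\<in>P x. Y e)" using P_def N_def by auto
  have YS: "Y e \<subseteq> S" if "e \<in> P x" for e using exchange_nbhd_subset[OF Y Y_common] PO that by blast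
  have heaviest: "x \<in> Y e \<and> (\<forall>z \<in> Y e. ?w z \<le> ?w x)" if "e \<in> P x" for e
  proof -
    have "e \<in> Opt" "Y e \<noteq> {}" "xe e = x" using that P_def by auto
    then show ?thesis using xe by metis
  qed
  then have common: "x \<in> Y e" if "e \<in> P x" for e using that by blast
  have w_nonneg: "0 \<le> ?w z" if "z \<in> S" for z using wt_nonneg[OF f alpha SG] SG that by blast
  have "k_replacement k G I S (P x) (N x)"
    unfolding Nx by (rule common_neighbour_replacement[OF kpos OG finO finS Y Y_common x PO]) (rule common)
  then have "(\<Sum>e\<in>P x. (repl_wt f \<alpha> r S (P x) (N x) e)^2) \<le> (\<Sum>z\<in>N x. (?w z)^2)"
    using opt unfolding locally_optimal_def by blast
  then show ?thesis unfolding Nx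
  proof (intro common_heaviest_point_bound[where Y = Y])
    show "finite (P x)" using PO finO finite_subset by blast
    show "finite (Y e)" if "e \<in> P x" for e using YS that finS finite_subset by blast
    show "0 \<le> ?w z \<and> ?w z \<le> ?w x" if "z \<in> (\<Union>e\<in>P x. Y e)" for z
      using that YS w_nonneg heaviest by blast
  qed (use common w_nonneg x in auto)
qed

end
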